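(* Let $\psi\in \mathcal{F}$. Then for $i=1,2,\dots,I$, $\phi_i\in\mathcal{C}^\uparrow$.
   Context: Fix $I\in\mathbb{N}$. $\mathcal{C}=\{f\in C(\mathbb{R}_+,\mathbb{R}_+):f(0)=0,f\text{ non-decreasing}\}$, $\mathcal{C}^\uparrow=\{f\in\mathcal{C}:f\text{ strictly increasing},\lim_{u\to\infty}f(u)=\infty\}$. For $\psi=(\psi_i)_{i=1}^I\in\mathcal{C}^I$, $\phi_i(u):=u-\sum_{j=1}^I2(i\wedge j)\psi_j(u)$. $\mathcal{F}:=\{\psi\in\mathcal{C}^I:\phi_I\in\mathcal{C}^\uparrow\}$. *)

theory Defs
  imports "HOL-Analysis.Analysis"
begin

text \<open>Functions R_+ -> R_+ are modelled as real => real, with all conditions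
  imposed only on the domain {0..}.\<close>

definition classC :: "(real \<Rightarrow> real) \<Rightarrow> bool" where
  "classC f \<longleftrightarrow> continuous_on {0..} f \<and> (\<forall>u\<ge>0. f u \<ge> 0) \<and> f 0 = 0
     \<and> mono_on {0..} f"

definition classC_up :: "(real \<Rightarrow> real) \<Rightarrow> bool" where
  "classC_up f \<longleftrightarrow> classC f \<and> strict_mono_on {0..} f
     \<and> filterlim f at_top at_top"

text \<open>psi is indexed by i in {1..I}.\<close>
definition phi :: "nat \<Rightarrow> (nat \<Rightarrow> real \<Rightarrow> real) \<Rightarrow> nat \<Rightarrow> real \<Rightarrow> real" where
  "phi I psi i u = u - (\<Sum>j=1..I. 2 * real (min i j) * psi j u)"

definition classF :: "nat \<Rightarrow> (nat \<Rightarrow> real \<Rightarrow> real) \<Rightarrow> bool" where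
  "classF I psi \<longleftrightarrow> (\<forall>i\<in>{1..I}. classC (psi i)) \<and> classC_up (phi I psi I)"

end

theory Submission
  imports Defs
begin

text \<open>Since \<open>min I j = j\<close> for \<open>j \<le> I\<close>, each \<open>\<phi>\<^sub>i\<close> equals \<open>\<phi>\<^sub>I\<close> plus the combination
  \<open>\<Sum>\<^sub>j 2 (j - min i j) \<psi>\<^sub>j\<close>, whose coefficients are non-negative. Such a combination
  lies in \<open>\<C>\<close>, and adding a function of \<open>\<C>\<close> to one of \<open>\<C>\<^sup>\<up>\<close> stays in \<open>\<C>\<^sup>\<up>\<close>.\<close>

lemma classC_zero: "classC (\<lambda>u. 0)"
  by (simp add: classC_def mono_on_def)

lemma classC_add:
  assumes "classC f" "classC g"
  shows "classC (\<lambda>u. f u + g u)"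
  using assms unfolding classC_def mono_on_def
  by (auto intro: continuous_on_add add_mono)

lemma classC_cmult:
  assumes "classC g" "0 \<le> c"
  shows "classC (\<lambda>u. c * g u)"
  using assms unfolding classC_def mono_on_def
  by (auto intro: continuous_on_mult_left mult_left_mono)

lemma classC_sum:
  assumes "finite A" "\<And>j. j \<in> A \<Longrightarrow> classC (g j)" "\<And>j. j \<in> A \<Longrightarrow> 0 \<le> c j"
  shows "classC (\<lambda>u. \<Sum>j\<in>A. c j * g j u)"
  using assms
proof (induction A rule: finite_induct)
  case empty
  then show ?case by (simp add: classC_zero)
next
  case (insert a A)
  then show ?case by (simp add: classC_add classC_cmult)
qed

lemma classC_up_add_classC:
  assumes f: "classC_up f" and g: "classC g"
  shows "classC_up (\<lambda>u. f u + g u)"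
proof -
  have g_nonneg: "\<And>u. 0 \<le> u \<Longrightarrow> 0 \<le> g u" and g_mono: "mono_on {0..} g"
    using g by (auto simp: classC_def)
  have "strict_mono_on {0..} (\<lambda>u. f u + g u)"
  proof (rule strict_mono_onI)
    fix r s :: real assume "r \<in> {0..}" "s \<in> {0..}" "r < s"
    then show "f r + g r < f s + g s"
      using f g_mono by (intro add_less_le_mono) (auto simp: classC_up_def strict_mono_on_def mono_on_def)
  qed
  moreover have "filterlim (\<lambda>u. f u + g u) at_top at_top"
  proof (rule filterlim_at_top_mono)
    show "filterlim f at_top at_top" using f by (simp add: classC_up_def)
    show "\<forall>\<^sub>F u in at_top. f u \<le> f u + g u"
      using eventually_ge_at_top[of "0::real"] by eventually_elim (simp add: g_nonneg)
  qed
  moreover have "classC (\<lambda>u. f u + g u)"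
    using f g by (simp add: classC_up_def classC_add)
  ultimately show ?thesis by (simp add: classC_up_def)
qed

lemma phi_eq_phi_top_plus:
  "phi I psi i u = phi I psi I u + (\<Sum>j=1..I. 2 * (real j - real (min i j)) * psi j u)"
proof -
  have "(\<Sum>j=1..I. 2 * real (min I j) * psi j u)
      = (\<Sum>j=1..I. 2 * real (min i j) * psi j u) + (\<Sum>j=1..I. 2 * (real j - real (min i j)) * psi j u)"
    unfolding sum.distrib[symmetric] by (rule sum.cong) (auto simp: algebra_simps)
  then show ?thesis unfolding phi_def by simp
qed

theorem lemma3p1:
  fixes I :: nat and psi :: "nat \<Rightarrow> real \<Rightarrow> real"
  assumes "I \<ge> 1"
    and "classF I psi"
  shows "\<forall>i\<in>{1..I}. classC_up (phi I psi i)"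
proof
  fix i assume "i \<in> {1..I}"
  have "classC_up (phi I psi I)" and "\<And>j. j \<in> {1..I} \<Longrightarrow> classC (psi j)"
    using assms(2) by (auto simp: classF_def)
  then show "classC_up (phi I psi i)"
    unfolding phi_eq_phi_top_plus[of I psi i, abs_def]
    by (intro classC_up_add_classC classC_sum) auto
qed

end
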